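(* Let $E: y^2=x^3+Ax^2+Bx$ ($A,B\in\mathbb{Z}$) with $E(\mathbb{Q})[2]\simeq\mathbb{Z}/2\mathbb{Z}$, let $\Delta$ be the discriminant of $E$ and $\Delta'$ the discriminant of $E'$. Let $d$ be a squarefree integer and $p$ a prime with $p\mid d$ and $\gcd(p,2\Delta)=1$. Then $$W_p^d=\begin{cases}\langle \Delta\rangle & \text{if } \left(\frac{\Delta'}{p}\right)=-1,\\ \langle \Delta,\ d(A+2\sqrt{B})\rangle & \text{if } \left(\frac{\Delta'}{p}\right)=1,\end{cases}$$ as subgroups of $\mathbb{Q}_p^\times/(\mathbb{Q}_p^\times)^2$.
   Context: $E': y^2=x^3-2Ax^2+(A^2-4B)x$, $\phi:E\to E'$ the 2-isogeny with kernel $\langle(0,0)\rangle$; $E^d,E'^d$ are the quadratic twists by $d$ with twisted isogeny $\phi$. Up to squares, $\Delta\equiv A^2-4B$ and $\Delta'\equiv B$; in particular when $(\Delta'/p)=1$, $B$ is a square in $\mathbb{Q}_p$ so $\sqrt{B}\in\mathbb{Q}_p$. $W_p^d=\kappa_p(E'^d(\mathbb{Q}_p)/\phi(E^d(\mathbb{Q}_p)))\subset \mathbb{Q}_p^\times/(\mathbb{Q}_p^\times)^2$, where $\kappa_p$ is the local Kummer map (on the untwisted curve it sends $(x,y)\ne(0,0)$ to $x$ and $(0,0)$ to $\Delta$). *)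

theory Defs
  imports "HOL-Number_Theory.Number_Theory" "HOL-Computational_Algebra.Squarefree"
begin

text \<open>The ring Z_p is modelled as the inverse limit of Z/p^n Z: compatible
  sequences f with 0 <= f n < p^n and f n = f (n+1) mod p^n.\<close>

type_synonym zp = "nat \<Rightarrow> int"

definition zp_carrier :: "int \<Rightarrow> zp set" where
  "zp_carrier p = {f. \<forall>n. 0 \<le> f n \<and> f n < p ^ n \<and> f n = f (Suc n) mod p ^ n}"

definition zp_of_int :: "int \<Rightarrow> int \<Rightarrow> zp" where
  "zp_of_int p a = (\<lambda>n. a mod p ^ n)"

definition zp_add :: "int \<Rightarrow> zp \<Rightarrow> zp \<Rightarrow> zp" where
  "zp_add p f g = (\<lambda>n. (f n + g n) mod p ^ n)"

definition zp_mult :: "int \<Rightarrow> zp \<Rightarrow> zp \<Rightarrow> zp" where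
  "zp_mult p f g = (\<lambda>n. (f n * g n) mod p ^ n)"

definition zp_zero :: zp where
  "zp_zero = (\<lambda>n. 0)"

definition zp_val :: "zp \<Rightarrow> nat" where
  "zp_val f = (LEAST n. f (Suc n) \<noteq> 0)"

definition zp_shift :: "int \<Rightarrow> nat \<Rightarrow> zp \<Rightarrow> zp" where
  "zp_shift p m f = (\<lambda>n. f (n + m) div p ^ m)"

text \<open>Q_p: every element is uniquely f / p^k with f in Z_p and (k = 0 or f a unit),
  so the pairs (k, f) with this normalisation condition form a faithful model of Q_p
  in which HOL equality is equality of p-adic numbers.\<close>

type_synonym qp = "nat \<times> zp"

definition Qp :: "int \<Rightarrow> qp set" where
  "Qp p = {(k, f). f \<in> zp_carrier p \<and> (k = 0 \<or> f 1 \<noteq> 0)}"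

definition qp_norm :: "int \<Rightarrow> nat \<Rightarrow> zp \<Rightarrow> qp" where
  "qp_norm p k h =
     (if h = zp_zero then (0, zp_zero)
      else (let m = min k (zp_val h) in (k - m, zp_shift p m h)))"

definition qp_of_int :: "int \<Rightarrow> int \<Rightarrow> qp" where
  "qp_of_int p a = (0, zp_of_int p a)"

definition qp_zero :: qp where
  "qp_zero = (0, zp_zero)"

definition qp_add :: "int \<Rightarrow> qp \<Rightarrow> qp \<Rightarrow> qp" where
  "qp_add p x y =
     (case x of (k, f) \<Rightarrow> case y of (l, g) \<Rightarrow>
        qp_norm p (max k l)
          (zp_add p (zp_mult p (zp_of_int p (p ^ (max k l - k))) f)
                    (zp_mult p (zp_of_int p (p ^ (max k l - l))) g)))"

definition qp_mult :: "int \<Rightarrow> qp \<Rightarrow> qp \<Rightarrow> qp" where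
  "qp_mult p x y = (case x of (k, f) \<Rightarrow> case y of (l, g) \<Rightarrow> qp_norm p (k + l) (zp_mult p f g))"

text \<open>A subset of Q_p^x / (Q_p^x)^2 is represented by its preimage in Q_p^x.
  sqclass p c is the preimage of the class of c.\<close>
definition sqclass :: "int \<Rightarrow> qp \<Rightarrow> qp set" where
  "sqclass p c = {qp_mult p c (qp_mult p t t) | t. t \<in> Qp p \<and> t \<noteq> qp_zero}"

text \<open>Preimages of the subgroups generated by one resp. two classes
  (Q_p^x/(Q_p^x)^2 is an elementary abelian 2-group).\<close>
definition sq_span1 :: "int \<Rightarrow> qp \<Rightarrow> qp set" where
  "sq_span1 p g = sqclass p (qp_of_int p 1) \<union> sqclass p g"

definition sq_span2 :: "int \<Rightarrow> qp \<Rightarrow> qp \<Rightarrow> qp set" where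
  "sq_span2 p g h = sqclass p (qp_of_int p 1) \<union> sqclass p g \<union> sqclass p h
                    \<union> sqclass p (qp_mult p g h)"

definition disc :: "int \<Rightarrow> int \<Rightarrow> int" where
  "disc a b = 16 * b^2 * (a^2 - 4 * b)"

text \<open>Points (None = point at infinity) over Q_p of y^2 = x^3 + a x^2 + b x.\<close>
definition qp_points :: "int \<Rightarrow> int \<Rightarrow> int \<Rightarrow> (qp \<times> qp) option set" where
  "qp_points p a b = {None} \<union>
     {Some (x, y) | x y. x \<in> Qp p \<and> y \<in> Qp p \<and>
        qp_mult p y y =
          qp_add p (qp_mult p x (qp_mult p x x))
            (qp_add p (qp_mult p (qp_of_int p a) (qp_mult p x x)) (qp_mult p (qp_of_int p b) x))}"

definition two_torsion_Q :: "int \<Rightarrow> int \<Rightarrow> (rat \<times> rat) option set" where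
  "two_torsion_Q a b = {None} \<union>
     {Some (x, 0) | x. x^3 + of_int a * x^2 + of_int b * x = 0}"

text \<open>Twists: E^d : y^2 = x^3 + dA x^2 + d^2 B x and
  E'^d : y^2 = x^3 - 2dA x^2 + d^2 (A^2 - 4B) x.
  Kummer map on E'^d(Q_p): O \<mapsto> 1, (0,0) \<mapsto> Delta, (x,y) \<mapsto> x.\<close>
definition kummer :: "int \<Rightarrow> int \<Rightarrow> int \<Rightarrow> (qp \<times> qp) option \<Rightarrow> qp" where
  "kummer p A B P = (case P of None \<Rightarrow> qp_of_int p 1
     | Some (x, y) \<Rightarrow> if x = qp_zero then qp_of_int p (disc A B) else x)"

text \<open>Preimage in Q_p^x of W_p^d = kappa_p(E'^d(Q_p)/phi(E^d(Q_p))); the image of the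
  quotient equals the image of E'^d(Q_p) under kappa_p.\<close>
definition W :: "int \<Rightarrow> int \<Rightarrow> int \<Rightarrow> int \<Rightarrow> qp set" where
  "W p A B d = (\<Union>P \<in> qp_points p (-2 * d * A) (d^2 * (A^2 - 4 * B)). sqclass p (kummer p A B P))"

end

theory Submission
  imports Defs
begin

text \<open>
  A p-adic number x is handled through integer sequences X with X n congruent to p^N x modulo
  p^n; the field operations become termwise operations, and equality becomes congruence modulo
  every p^n. A point (x, y) of E'^d with x \<noteq> 0 has x = p^k u with u a unit, and substituting
  into the curve equation (d = p d0) and comparing valuations of both sides gives three cases:
  if k \<le> 0 or k \<ge> 2 then k is even and u is, modulo p, a square resp. \<Delta> times a square;
  if k = 1 then u is, modulo p, a root of T^2 - 2 d0 A T + d0^2 (A^2 - 4B)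
  = (T - d0 A)^2 - 4 d0^2 B. Since p is odd, Hensel lifting turns these congruences into
  the square classes of 1 and \<Delta>, respectively into those of d (A \<plusminus> 2 \<surd>B). The last case
  is impossible when B is not a square modulo p; otherwise the two classes are those of
  d (A + 2 \<surd>B) and of \<Delta> d (A + 2 \<surd>B) = d (A - 2 \<surd>B) (4 B (A + 2 \<surd>B))^2.
  Conversely 1, \<Delta> and d (A \<plusminus> 2 \<surd>B) are the Kummer images of O, (0,0) and the
  remaining 2-torsion points.
\<close>

section \<open>p-adic numbers as coherent integer sequences\<close>

locale padic_prime =
  fixes p :: int
  assumes prime_p: "prime p"
begin

lemma p_gt_1: "p > 1"
  using prime_p prime_gt_1_int by blast

lemma p_power_pos: "p ^ n > 0"
  using p_gt_1 by simp

lemma p_not_dvd_1: "\<not> p dvd 1"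
  using p_gt_1 zdvd_imp_le by fastforce

definition seq_cong :: "(nat \<Rightarrow> int) \<Rightarrow> (nat \<Rightarrow> int) \<Rightarrow> bool" where
  "seq_cong F G \<longleftrightarrow> (\<forall>n. [F n = G n] (mod p ^ n))"

definition coherent :: "(nat \<Rightarrow> int) \<Rightarrow> bool" where
  "coherent F \<longleftrightarrow> (\<forall>n. [F (Suc n) = F n] (mod p ^ n))"

definition unit_seq :: "(nat \<Rightarrow> int) \<Rightarrow> bool" where
  "unit_seq S \<longleftrightarrow> coherent S \<and> \<not> p dvd S 1"

definition reduce :: "(nat \<Rightarrow> int) \<Rightarrow> zp" where
  "reduce F = (\<lambda>n. F n mod p ^ n)"

lemma seq_cong_refl [simp]: "seq_cong F F"
  by (simp add: seq_cong_def)

lemma seq_cong_sym: "seq_cong F G \<Longrightarrow> seq_cong G F"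
  by (simp add: seq_cong_def cong_sym_eq)

lemma seq_cong_trans: "seq_cong F G \<Longrightarrow> seq_cong G H \<Longrightarrow> seq_cong F H"
  unfolding seq_cong_def by (metis cong_trans)

lemma seq_cong_add:
  "seq_cong F F' \<Longrightarrow> seq_cong G G' \<Longrightarrow> seq_cong (\<lambda>n. F n + G n) (\<lambda>n. F' n + G' n)"
  unfolding seq_cong_def by (blast intro: cong_add)

lemma seq_cong_mult:
  "seq_cong F F' \<Longrightarrow> seq_cong G G' \<Longrightarrow> seq_cong (\<lambda>n. F n * G n) (\<lambda>n. F' n * G' n)"
  unfolding seq_cong_def by (blast intro: cong_mult)

lemma seq_cong_smult: "seq_cong F F' \<Longrightarrow> seq_cong (\<lambda>n. c * F n) (\<lambda>n. c * F' n)"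
  unfolding seq_cong_def by (blast intro: cong_mult cong_refl)

lemma seq_cong_imp_cong_1: "seq_cong F G \<Longrightarrow> [F 1 = G 1] (mod p)"
  unfolding seq_cong_def by (metis power_one_right)

lemma seq_cong_zero_factor:
  assumes "seq_cong F (\<lambda>n. c)"
  shows "seq_cong (\<lambda>n. G n * (F n - c)) (\<lambda>n. 0)"
  unfolding seq_cong_def
proof
  fix n
  have "[F n - c = c - c] (mod p ^ n)"
    using assms unfolding seq_cong_def by (blast intro: cong_diff cong_refl)
  then have "[G n * (F n - c) = G n * 0] (mod p ^ n)"
    by (intro cong_mult cong_refl) simp
  then show "[G n * (F n - c) = 0] (mod p ^ n)" by simp
qed

lemma coherent_le:
  assumes "coherent F" "m \<le> n"
  shows "[F n = F m] (mod p ^ m)"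
  using assms(2)
proof (induction n)
  case (Suc n)
  show ?case
  proof (cases "m = Suc n")
    case False
    then have "m \<le> n" using Suc by simp
    have "[F (Suc n) = F n] (mod p ^ m)"
      using assms(1) le_imp_power_dvd[OF \<open>m \<le> n\<close>] unfolding coherent_def
      by (blast intro: cong_dvd_modulus)
    then show ?thesis using Suc.IH[OF \<open>m \<le> n\<close>] by (rule cong_trans)
  qed simp
qed simp

lemma coherent_cong_1: "coherent F \<Longrightarrow> 1 \<le> n \<Longrightarrow> [F n = F 1] (mod p)"
  using coherent_le[of F 1 n] by simp

lemma coherent_add: "coherent F \<Longrightarrow> coherent G \<Longrightarrow> coherent (\<lambda>n. F n + G n)"
  by (simp add: coherent_def cong_add)

lemma coherent_mult: "coherent F \<Longrightarrow> coherent G \<Longrightarrow> coherent (\<lambda>n. F n * G n)"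
  by (simp add: coherent_def cong_mult)

lemma coherent_const: "coherent (\<lambda>n. c)"
  by (simp add: coherent_def)

lemma coherent_smult: "coherent F \<Longrightarrow> coherent (\<lambda>n. c * F n)"
  by (simp add: coherent_def cong_mult)

lemma coherent_seq_cong: "coherent F \<Longrightarrow> seq_cong F G \<Longrightarrow> coherent G"
  unfolding coherent_def seq_cong_def
proof
  fix n
  assume F: "\<forall>n. [F (Suc n) = F n] (mod p ^ n)" and FG: "\<forall>n. [F n = G n] (mod p ^ n)"
  have "[G (Suc n) = F (Suc n)] (mod p ^ Suc n)"
    using FG cong_sym by blast
  then have "[G (Suc n) = F (Suc n)] (mod p ^ n)"
    by (rule cong_dvd_modulus) (simp add: le_imp_power_dvd)
  also have "[F (Suc n) = F n] (mod p ^ n)" using F by blast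
  also have "[F n = G n] (mod p ^ n)" using FG by blast
  finally show "[G (Suc n) = G n] (mod p ^ n)" .
qed

lemma seq_cong_cancel_power:
  assumes "coherent F" "coherent G" "seq_cong (\<lambda>n. p ^ j * F n) (\<lambda>n. p ^ j * G n)"
  shows "seq_cong F G"
  unfolding seq_cong_def
proof
  fix n
  have "[p ^ j * F (n + j) = p ^ j * G (n + j)] (mod p ^ (n + j))"
    using assms(3) by (simp add: seq_cong_def)
  then have "(p ^ j * F (n + j)) mod (p ^ j * p ^ n) = (p ^ j * G (n + j)) mod (p ^ j * p ^ n)"
    by (simp add: cong_def power_add mult.commute)
  then have "[F (n + j) = G (n + j)] (mod p ^ n)"
    using p_gt_1 by (simp only: mod_mult_mult1 cong_def) auto
  moreover have "[F (n + j) = F n] (mod p ^ n)" "[G (n + j) = G n] (mod p ^ n)"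
    using coherent_le assms by auto
  ultimately show "[F n = G n] (mod p ^ n)"
    by (metis cong_sym cong_trans)
qed

lemma unit_seq_not_dvd: "unit_seq S \<Longrightarrow> 1 \<le> n \<Longrightarrow> \<not> p dvd S n"
  unfolding unit_seq_def using coherent_cong_1 cong_dvd_iff by blast

lemma unit_seq_const: "\<not> p dvd c \<Longrightarrow> unit_seq (\<lambda>n. c)"
  by (simp add: unit_seq_def coherent_const)

lemma unit_seq_cong_1: "unit_seq U \<Longrightarrow> 1 \<le> n \<Longrightarrow> [U n = U 1] (mod p)"
  unfolding unit_seq_def using coherent_cong_1 by blast

lemma unit_seq_cancel:
  assumes "unit_seq S" "seq_cong (\<lambda>n. S n * T n) (\<lambda>n. 0)"
  shows "seq_cong T (\<lambda>n. 0)"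
  unfolding seq_cong_def
proof
  fix n
  show "[T n = 0] (mod p ^ n)"
  proof (cases "n = 0")
    case False
    then have "coprime (p ^ n) (S n)"
      using unit_seq_not_dvd[OF assms(1)] prime_imp_coprime[OF prime_p] by simp
    moreover have "p ^ n dvd S n * T n"
      using assms(2) by (simp add: seq_cong_def cong_0_iff)
    ultimately show ?thesis by (simp add: coprime_dvd_mult_right_iff cong_0_iff)
  qed simp
qed

lemma zp_carrier_range: "f \<in> zp_carrier p \<Longrightarrow> 0 \<le> f n \<and> f n < p ^ n"
  unfolding zp_carrier_def by blast

lemma zp_carrier_mod: "f \<in> zp_carrier p \<Longrightarrow> f n mod p ^ n = f n"
  using zp_carrier_range by (simp add: mod_pos_pos_trivial)

lemma zp_carrier_coherent:
  assumes "f \<in> zp_carrier p"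
  shows "coherent f"
  unfolding coherent_def cong_def
proof
  fix n
  have "f n = f (Suc n) mod p ^ n" using assms unfolding zp_carrier_def by blast
  then show "f (Suc n) mod p ^ n = f n mod p ^ n" using zp_carrier_mod[OF assms] by simp
qed

lemma zp_carrier_le:
  assumes "f \<in> zp_carrier p" "m \<le> n"
  shows "f m = f n mod p ^ m"
  using coherent_le[OF zp_carrier_coherent[OF assms(1)] assms(2)] zp_carrier_mod[OF assms(1)]
  unfolding cong_def by simp

lemma zp_carrier_0: "f \<in> zp_carrier p \<Longrightarrow> f 0 = 0"
  using zp_carrier_range[of f 0] by simp

lemma zp_carrier_eqI:
  assumes "f \<in> zp_carrier p" "g \<in> zp_carrier p" "seq_cong f g"
  shows "f = g"
proof
  fix n
  have "f n mod p ^ n = g n mod p ^ n" using assms(3) by (simp add: seq_cong_def cong_def)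
  then show "f n = g n" using zp_carrier_mod assms(1,2) by simp
qed

lemma zp_carrier_dvd_1_iff:
  "f \<in> zp_carrier p \<Longrightarrow> p dvd f 1 \<longleftrightarrow> f 1 = 0"
  using zp_carrier_range[of f 1] zdvd_imp_le by fastforce

lemma reduce_in_zp_carrier: "coherent F \<Longrightarrow> reduce F \<in> zp_carrier p"
  unfolding zp_carrier_def reduce_def coherent_def cong_def
  using p_power_pos by (simp add: mod_mod_cancel le_imp_power_dvd)

lemma seq_cong_reduce: "seq_cong (reduce F) F"
  by (simp add: seq_cong_def reduce_def cong_def)

lemma zp_mult_in_carrier: "f \<in> zp_carrier p \<Longrightarrow> g \<in> zp_carrier p \<Longrightarrow> zp_mult p f g \<in> zp_carrier p"
  using reduce_in_zp_carrier[OF coherent_mult[OF zp_carrier_coherent zp_carrier_coherent]]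
  by (simp add: zp_mult_def reduce_def)

lemma zp_add_in_carrier: "f \<in> zp_carrier p \<Longrightarrow> g \<in> zp_carrier p \<Longrightarrow> zp_add p f g \<in> zp_carrier p"
  using reduce_in_zp_carrier[OF coherent_add[OF zp_carrier_coherent zp_carrier_coherent]]
  by (simp add: zp_add_def reduce_def)

lemma zp_of_int_in_carrier: "zp_of_int p a \<in> zp_carrier p"
  using reduce_in_zp_carrier[OF coherent_const] by (simp add: zp_of_int_def reduce_def)

lemma zp_zero_in_carrier: "zp_zero \<in> zp_carrier p"
  unfolding zp_zero_def zp_carrier_def using p_power_pos by auto

lemma Qp_iff: "x \<in> Qp p \<longleftrightarrow> snd x \<in> zp_carrier p \<and> (fst x = 0 \<or> snd x 1 \<noteq> 0)"
  by (cases x) (simp add: Qp_def)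


lemma zp_val_nonzero:
  assumes "h \<in> zp_carrier p" "h \<noteq> zp_zero"
  shows "h (Suc (zp_val h)) \<noteq> 0"
proof -
  obtain n where "h n \<noteq> 0" using assms(2) unfolding zp_zero_def by auto
  moreover have "n \<noteq> 0" using calculation zp_carrier_0[OF assms(1)] by (cases n) auto
  ultimately have "\<exists>n. h (Suc n) \<noteq> 0" by (metis not0_implies_Suc)
  then show ?thesis unfolding zp_val_def by (rule LeastI_ex)
qed

lemma zp_val_below:
  assumes "h \<in> zp_carrier p" "j \<le> zp_val h"
  shows "h j = 0"
proof (cases j)
  case (Suc i)
  then have "i < zp_val h" using assms(2) by simp
  then show ?thesis using Suc unfolding zp_val_def by (metis not_less_Least)
qed (use zp_carrier_0[OF assms(1)] in simp)

lemma zp_shift_mult: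
  assumes "h \<in> zp_carrier p" "m \<le> zp_val h"
  shows "p ^ m * zp_shift p m h n = h (n + m)"
proof -
  have "h (n + m) mod p ^ m = 0"
    using zp_carrier_le[OF assms(1), of m "n + m"] zp_val_below[OF assms] by simp
  then show ?thesis unfolding zp_shift_def by (simp add: mod_eq_0_iff_dvd)
qed

lemma zp_shift_in_carrier:
  assumes "h \<in> zp_carrier p" "m \<le> zp_val h"
  shows "zp_shift p m h \<in> zp_carrier p"
  unfolding zp_carrier_def
proof (intro CollectI allI conjI)
  fix n
  let ?s = "zp_shift p m h"
  have e: "\<And>n. p ^ m * ?s n = h (n + m)" using zp_shift_mult[OF assms] .
  have pm: "p ^ m > 0" by (rule p_power_pos)
  have "0 \<le> p ^ m * ?s n" "p ^ m * ?s n < p ^ m * p ^ n"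
    using e zp_carrier_range[OF assms(1), of "n + m"] by (simp_all add: power_add mult.commute)
  then show "0 \<le> ?s n" "?s n < p ^ n" using pm by (simp_all add: zero_le_mult_iff)
  have "p ^ m * ?s n = h (Suc (n + m)) mod p ^ (n + m)"
    using e zp_carrier_le[OF assms(1), of "n + m" "Suc (n + m)"] by simp
  also have "\<dots> = (p ^ m * ?s (Suc n)) mod (p ^ m * p ^ n)"
    using e[of "Suc n"] by (simp add: power_add mult.commute)
  also have "\<dots> = p ^ m * (?s (Suc n) mod p ^ n)" by (rule mod_mult_mult1)
  finally show "?s n = ?s (Suc n) mod p ^ n" using pm p_gt_1 by auto
qed

lemma zp_shift_val_unit:
  assumes "h \<in> zp_carrier p" "h \<noteq> zp_zero"
  shows "\<not> p dvd zp_shift p (zp_val h) h 1"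
proof -
  have "p ^ zp_val h * zp_shift p (zp_val h) h 1 \<noteq> 0"
    using zp_shift_mult[OF assms(1), of "zp_val h" 1] zp_val_nonzero[OF assms] by simp
  then show ?thesis
    using zp_carrier_dvd_1_iff[OF zp_shift_in_carrier[OF assms(1) order_refl]] by simp
qed

text \<open>\<open>repr N x X\<close>: the integer sequence \<open>X\<close> represents \<open>p^N x\<close>, i.e.
  \<open>X n \<equiv> p^N x (mod p^n)\<close>. The level \<open>N\<close> must clear the denominator \<open>p^(fst x)\<close>.\<close>

definition repr :: "nat \<Rightarrow> qp \<Rightarrow> (nat \<Rightarrow> int) \<Rightarrow> bool" where
  "repr N x X \<longleftrightarrow> x \<in> Qp p \<and> fst x \<le> N \<and> seq_cong (\<lambda>n. p ^ (N - fst x) * snd x n) X"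

lemma repr_self: "x \<in> Qp p \<Longrightarrow> fst x \<le> N \<Longrightarrow> repr N x (\<lambda>n. p ^ (N - fst x) * snd x n)"
  by (simp add: repr_def)

lemma repr_in_Qp: "repr N x X \<Longrightarrow> x \<in> Qp p"
  by (simp add: repr_def)

lemma repr_seq_cong: "repr N x X \<Longrightarrow> seq_cong X X' \<Longrightarrow> repr N x X'"
  unfolding repr_def by (blast intro: seq_cong_trans)

lemma repr_unique: "repr N x X \<Longrightarrow> repr N x X' \<Longrightarrow> seq_cong X X'"
  unfolding repr_def by (blast intro: seq_cong_trans seq_cong_sym)

lemma repr_coherent: "repr N x X \<Longrightarrow> coherent X"
  unfolding repr_def Qp_iff
  by (blast intro: coherent_seq_cong coherent_smult zp_carrier_coherent)

lemma repr_raise: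
  assumes "repr N x X" "N \<le> M"
  shows "repr M x (\<lambda>n. p ^ (M - N) * X n)"
proof -
  have "(\<lambda>n. p ^ (M - fst x) * snd x n) = (\<lambda>n. p ^ (M - N) * (p ^ (N - fst x) * snd x n))"
    using assms by (auto simp: repr_def power_add[symmetric])
  then show ?thesis
    using assms seq_cong_smult[of _ X "p ^ (M - N)"] by (auto simp: repr_def)
qed

lemma repr_qp_norm:
  assumes "h \<in> zp_carrier p" "K \<le> N"
  shows "repr N (qp_norm p K h) (\<lambda>n. p ^ (N - K) * h n)"
proof (cases "h = zp_zero")
  case True
  then show ?thesis using zp_zero_in_carrier
    by (simp add: qp_norm_def repr_def Qp_def zp_zero_def)
next
  case False
  define m where "m = min K (zp_val h)"
  have m: "m \<le> zp_val h" "m \<le> K" unfolding m_def by auto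
  have q: "qp_norm p K h = (K - m, zp_shift p m h)"
    using False by (simp add: qp_norm_def m_def Let_def)
  have "K - m = 0 \<or> zp_shift p m h 1 \<noteq> 0"
    using zp_shift_val_unit[OF assms(1) False] m_def by (cases "K - m = 0") auto
  then have "qp_norm p K h \<in> Qp p"
    using q zp_shift_in_carrier[OF assms(1) m(1)] by (simp add: Qp_def)
  moreover have "seq_cong (\<lambda>n. p ^ (N - (K - m)) * zp_shift p m h n) (\<lambda>n. p ^ (N - K) * h n)"
    unfolding seq_cong_def
  proof
    fix n
    have "N - (K - m) = (N - K) + m" using m assms(2) by simp
    then have "p ^ (N - (K - m)) * zp_shift p m h n = p ^ (N - K) * h (n + m)"
      using zp_shift_mult[OF assms(1) m(1), of n] by (simp add: power_add mult.assoc)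
    moreover have "[h (n + m) = h n] (mod p ^ n)"
      using coherent_le[OF zp_carrier_coherent[OF assms(1)]] by simp
    ultimately show "[p ^ (N - (K - m)) * zp_shift p m h n = p ^ (N - K) * h n] (mod p ^ n)"
      by (simp add: cong_mult cong_refl)
  qed
  ultimately show ?thesis using q assms(2) by (simp add: repr_def)
qed

lemma repr_mult:
  assumes "repr N x X" "repr M y Y"
  shows "repr (N + M) (qp_mult p x y) (\<lambda>n. X n * Y n)"
proof -
  obtain k f where x: "x = (k, f)" by (cases x)
  obtain l g where y: "y = (l, g)" by (cases y)
  have f: "f \<in> zp_carrier p" "k \<le> N" "seq_cong (\<lambda>n. p ^ (N - k) * f n) X"
    and g: "g \<in> zp_carrier p" "l \<le> M" "seq_cong (\<lambda>n. p ^ (M - l) * g n) Y"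
    using assms x y by (auto simp: repr_def Qp_def)
  have "repr (N + M) (qp_mult p x y) (\<lambda>n. p ^ (N + M - (k + l)) * zp_mult p f g n)"
    unfolding x y qp_mult_def using repr_qp_norm[OF zp_mult_in_carrier[OF f(1) g(1)]] f(2) g(2)
    by simp
  moreover have "seq_cong (\<lambda>n. p ^ (N + M - (k + l)) * zp_mult p f g n)
      (\<lambda>n. (p ^ (N - k) * f n) * (p ^ (M - l) * g n))"
    unfolding seq_cong_def
  proof
    fix n
    have e: "N + M - (k + l) = (N - k) + (M - l)" using f(2) g(2) by simp
    have "[zp_mult p f g n = f n * g n] (mod p ^ n)" by (simp add: zp_mult_def cong_def)
    then have "[p ^ (N + M - (k + l)) * zp_mult p f g n = p ^ (N + M - (k + l)) * (f n * g n)] (mod p ^ n)"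
      by (simp add: cong_mult cong_refl)
    then show "[p ^ (N + M - (k + l)) * zp_mult p f g n = (p ^ (N - k) * f n) * (p ^ (M - l) * g n)] (mod p ^ n)"
      by (simp only: e power_add) (simp add: algebra_simps)
  qed
  ultimately show ?thesis
    using seq_cong_mult[OF f(3) g(3)] by (blast intro: repr_seq_cong seq_cong_trans)
qed

lemma repr_add:
  assumes "repr N x X" "repr N y Y"
  shows "repr N (qp_add p x y) (\<lambda>n. X n + Y n)"
proof -
  obtain k f where x: "x = (k, f)" by (cases x)
  obtain l g where y: "y = (l, g)" by (cases y)
  have f: "f \<in> zp_carrier p" "k \<le> N" "seq_cong (\<lambda>n. p ^ (N - k) * f n) X"
    and g: "g \<in> zp_carrier p" "l \<le> N" "seq_cong (\<lambda>n. p ^ (N - l) * g n) Y"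
    using assms x y by (auto simp: repr_def Qp_def)
  define K where "K = max k l"
  define h where "h = zp_add p (zp_mult p (zp_of_int p (p ^ (K - k))) f)
                    (zp_mult p (zp_of_int p (p ^ (K - l))) g)"
  have "h \<in> zp_carrier p"
    unfolding h_def by (intro zp_add_in_carrier zp_mult_in_carrier zp_of_int_in_carrier f g)
  then have "repr N (qp_add p x y) (\<lambda>n. p ^ (N - K) * h n)"
    using repr_qp_norm f(2) g(2) by (simp add: x y qp_add_def K_def h_def)
  moreover have "seq_cong (\<lambda>n. p ^ (N - K) * h n) (\<lambda>n. p ^ (N - k) * f n + p ^ (N - l) * g n)"
    unfolding seq_cong_def
  proof
    fix n
    have e: "N - k = (N - K) + (K - k)" "N - l = (N - K) + (K - l)"
      using f(2) g(2) K_def by auto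
    have "[h n = p ^ (K - k) * f n + p ^ (K - l) * g n] (mod p ^ n)"
      by (simp add: h_def zp_add_def zp_mult_def zp_of_int_def cong_def mod_simps)
    then have "[p ^ (N - K) * h n = p ^ (N - K) * (p ^ (K - k) * f n + p ^ (K - l) * g n)] (mod p ^ n)"
      by (simp add: cong_mult cong_refl)
    then show "[p ^ (N - K) * h n = p ^ (N - k) * f n + p ^ (N - l) * g n] (mod p ^ n)"
      by (simp add: e power_add algebra_simps)
  qed
  ultimately show ?thesis
    using seq_cong_add[OF f(3) g(3)] by (blast intro: repr_seq_cong seq_cong_trans)
qed

lemma repr_of_int: "repr N (qp_of_int p a) (\<lambda>n. p ^ N * a)"
  using zp_of_int_in_carrier
  by (simp add: repr_def qp_of_int_def Qp_def seq_cong_def zp_of_int_def cong_def mod_simps)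

lemma repr_of_int_0: "repr 0 (qp_of_int p a) (\<lambda>n. a)"
  using repr_of_int[of 0 a] by simp

lemma repr_zero: "repr N qp_zero (\<lambda>n. 0)"
  using zp_zero_in_carrier by (simp add: repr_def qp_zero_def Qp_def zp_zero_def)

lemma repr_eqI:
  assumes "repr N x X" "repr N y Y" "seq_cong X Y"
  shows "x = y"
proof -
  have main: "x = y" if "repr N x X" "repr N y X" "fst x \<le> fst y" for x y
  proof -
    obtain k f where x: "x = (k, f)" by (cases x)
    obtain l g where y: "y = (l, g)" by (cases y)
    have fg: "f \<in> zp_carrier p" "g \<in> zp_carrier p" "k \<le> l" "l \<le> N" "l = 0 \<or> g 1 \<noteq> 0"
      using that x y by (auto simp: repr_def Qp_def)
    have "seq_cong (\<lambda>n. p ^ (N - k) * f n) (\<lambda>n. p ^ (N - l) * g n)"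
      using that x y unfolding repr_def by (auto intro: seq_cong_trans seq_cong_sym)
    moreover have "N - k = (N - l) + (l - k)" using fg by simp
    ultimately have "seq_cong (\<lambda>n. p ^ (N - l) * (p ^ (l - k) * f n)) (\<lambda>n. p ^ (N - l) * g n)"
      by (simp add: power_add mult.assoc)
    then have e: "seq_cong (\<lambda>n. p ^ (l - k) * f n) g"
      by (rule seq_cong_cancel_power[OF coherent_smult[OF zp_carrier_coherent[OF fg(1)]]
            zp_carrier_coherent[OF fg(2)]])
    show ?thesis
    proof (cases "k = l")
      case True
      then show ?thesis using e zp_carrier_eqI[OF fg(1,2)] x y by simp
    next
      case False
      then have "p dvd p ^ (l - k) * f 1" using fg(3) by (simp add: dvd_power)
      then have "p dvd g 1" using seq_cong_imp_cong_1[OF e] cong_dvd_iff by blast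
      then show ?thesis using False fg zp_carrier_dvd_1_iff by auto
    qed
  qed
  have "repr N y X" using assms(2,3) seq_cong_sym repr_seq_cong by blast
  then show ?thesis
    using main[OF assms(1)] main[OF _ assms(1)] by (metis nle_le)
qed

lemma repr_exists: "x \<in> Qp p \<Longrightarrow> \<exists>X. repr (fst x) x X"
  using repr_self by blast

lemma repr_unit_nonzero:
  assumes "repr N x (\<lambda>n. p ^ i * S n)" "unit_seq S"
  shows "x \<noteq> qp_zero"
proof
  assume "x = qp_zero"
  then have "repr N qp_zero (\<lambda>n. p ^ i * S n)" using assms(1) by simp
  then have "seq_cong (\<lambda>n. p ^ i * S n) (\<lambda>n. p ^ i * 0)"
    using repr_unique[OF _ repr_zero] by simp
  then have "seq_cong S (\<lambda>n. 0)"
    using seq_cong_cancel_power assms(2) coherent_const unfolding unit_seq_def by blast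
  then have "[S 1 = 0] (mod p)" using seq_cong_imp_cong_1 by fastforce
  then show False using assms(2) by (simp add: unit_seq_def cong_0_iff)
qed

lemma qp_nonzero_repr:
  assumes "x \<in> Qp p" "x \<noteq> qp_zero"
  shows "\<exists>i S. repr (fst x) x (\<lambda>n. p ^ i * S n) \<and> unit_seq S"
proof -
  obtain k f where x: "x = (k, f)" by (cases x)
  have f: "f \<in> zp_carrier p" "k = 0 \<or> f 1 \<noteq> 0" using assms(1) x by (auto simp: Qp_def)
  have "f \<noteq> zp_zero" using f(2) assms(2) x by (auto simp: qp_zero_def zp_zero_def)
  define v where "v = zp_val f"
  define S where "S = zp_shift p v f"
  have "unit_seq S"
    unfolding unit_seq_def S_def v_def
    using zp_carrier_coherent[OF zp_shift_in_carrier[OF f(1) order_refl]]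
      zp_shift_val_unit[OF f(1) \<open>f \<noteq> zp_zero\<close>] by blast
  moreover have "seq_cong f (\<lambda>n. p ^ v * S n)"
    unfolding seq_cong_def
  proof
    fix n
    show "[f n = p ^ v * S n] (mod p ^ n)"
      using zp_carrier_le[OF f(1), of n "n + v"] zp_shift_mult[OF f(1), of v n]
      by (simp add: v_def S_def cong_def)
  qed
  ultimately show ?thesis
    using repr_seq_cong[OF repr_self[OF assms(1) order_refl]] x by auto
qed

lemma exists_repr_unit:
  assumes "unit_seq S"
  shows "\<exists>t. repr k t (\<lambda>n. p ^ j * S n)"
proof (cases "k \<le> j")
  case True
  define t where "t = (0::nat, reduce (\<lambda>n. p ^ (j - k) * S n))"
  have "t \<in> Qp p"
    using reduce_in_zp_carrier coherent_smult assms by (simp add: t_def Qp_def unit_seq_def)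
  then have "repr k t (\<lambda>n. p ^ k * reduce (\<lambda>n. p ^ (j - k) * S n) n)"
    using repr_self[of t k] by (simp add: t_def)
  then have "repr k t (\<lambda>n. p ^ k * (p ^ (j - k) * S n))"
    using repr_seq_cong seq_cong_smult[OF seq_cong_reduce] by blast
  then have "repr k t (\<lambda>n. p ^ j * S n)"
    using True by (simp add: power_add[symmetric] mult.assoc[symmetric])
  then show ?thesis by blast
next
  case False
  define t where "t = (k - j, reduce S)"
  have "reduce S 1 \<noteq> 0"
    using assms by (simp add: reduce_def unit_seq_def dvd_eq_mod_eq_0)
  then have "t \<in> Qp p"
    using reduce_in_zp_carrier assms by (simp add: t_def Qp_def unit_seq_def)
  then have "repr k t (\<lambda>n. p ^ (k - (k - j)) * reduce S n)"
    using repr_self[of t k] by (simp add: t_def)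
  then have "repr k t (\<lambda>n. p ^ (k - (k - j)) * S n)"
    using repr_seq_cong seq_cong_smult[OF seq_cong_reduce] by blast
  then have "repr k t (\<lambda>n. p ^ j * S n)" using False by simp
  then show ?thesis by blast
qed

lemma qp_mult_in_Qp:
  assumes "x \<in> Qp p" "y \<in> Qp p"
  shows "qp_mult p x y \<in> Qp p"
proof -
  obtain X where X: "repr (fst x) x X" using repr_exists assms(1) by blast
  obtain Y where Y: "repr (fst y) y Y" using repr_exists assms(2) by blast
  show ?thesis using repr_in_Qp[OF repr_mult[OF X Y]] .
qed

lemma qp_mult_assoc:
  assumes "x \<in> Qp p" "y \<in> Qp p" "z \<in> Qp p"
  shows "qp_mult p (qp_mult p x y) z = qp_mult p x (qp_mult p y z)"
proof -
  obtain X where X: "repr (fst x) x X" using repr_exists assms(1) by blast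
  obtain Y where Y: "repr (fst y) y Y" using repr_exists assms(2) by blast
  obtain Z where Z: "repr (fst z) z Z" using repr_exists assms(3) by blast
  have "repr (fst x + fst y + fst z) (qp_mult p (qp_mult p x y) z) (\<lambda>n. X n * Y n * Z n)"
    "repr (fst x + fst y + fst z) (qp_mult p x (qp_mult p y z)) (\<lambda>n. X n * (Y n * Z n))"
    using repr_mult[OF repr_mult[OF X Y] Z] repr_mult[OF X repr_mult[OF Y Z]]
    by (simp_all add: add.assoc)
  then show ?thesis by (rule repr_eqI) (simp add: mult.assoc)
qed

lemma qp_mult_squares:
  assumes "x \<in> Qp p" "y \<in> Qp p"
  shows "qp_mult p (qp_mult p x x) (qp_mult p y y) = qp_mult p (qp_mult p x y) (qp_mult p x y)"
proof -
  obtain X where X: "repr (fst x) x X" using repr_exists assms(1) by blast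
  obtain Y where Y: "repr (fst y) y Y" using repr_exists assms(2) by blast
  have "repr (fst x + fst x + (fst y + fst y)) (qp_mult p (qp_mult p x x) (qp_mult p y y))
      (\<lambda>n. X n * X n * (Y n * Y n))"
    "repr (fst x + fst x + (fst y + fst y)) (qp_mult p (qp_mult p x y) (qp_mult p x y))
      (\<lambda>n. X n * Y n * (X n * Y n))"
    using repr_mult[OF repr_mult[OF X X] repr_mult[OF Y Y]]
      repr_mult[OF repr_mult[OF X Y] repr_mult[OF X Y]] by (simp_all add: ac_simps)
  then show ?thesis by (rule repr_eqI) (simp add: ac_simps)
qed

lemma qp_mult_nonzero:
  assumes "x \<in> Qp p" "y \<in> Qp p" "x \<noteq> qp_zero" "y \<noteq> qp_zero"
  shows "qp_mult p x y \<noteq> qp_zero"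
proof
  assume xy: "qp_mult p x y = qp_zero"
  obtain i S where x: "repr (fst x) x (\<lambda>n. p ^ i * S n)" "unit_seq S"
    using qp_nonzero_repr assms(1,3) by blast
  obtain Y where y: "repr (fst y) y Y" using repr_exists assms(2) by blast
  have "repr (fst x + fst y) qp_zero (\<lambda>n. p ^ i * S n * Y n)"
    using repr_mult[OF x(1) y] xy by simp
  then have "seq_cong (\<lambda>n. p ^ i * (S n * Y n)) (\<lambda>n. p ^ i * 0)"
    using repr_unique[OF _ repr_zero] by (simp add: mult.assoc)
  moreover have "coherent (\<lambda>n. S n * Y n)"
    using x(2) repr_coherent[OF y] by (simp add: unit_seq_def coherent_mult)
  ultimately have "seq_cong (\<lambda>n. S n * Y n) (\<lambda>n. 0)"
    using seq_cong_cancel_power coherent_const by blast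
  then have "seq_cong Y (\<lambda>n. 0)" by (rule unit_seq_cancel[OF x(2)])
  then have "y = qp_zero" using repr_eqI[OF y repr_zero] by blast
  then show False using assms(4) by simp
qed

lemma repr_square_root:
  assumes s: "s \<in> Qp p" and sq: "qp_mult p s s = qp_of_int p b" and b: "\<not> p dvd b"
  shows "repr 0 s (snd s) \<and> seq_cong (\<lambda>n. snd s n ^ 2) (\<lambda>n. b)"
proof -
  have "fst s = 0"
  proof (rule ccontr)
    assume k: "fst s \<noteq> 0"
    have r: "repr (fst s) s (snd s)" using repr_self[OF s order_refl] by simp
    have "seq_cong (\<lambda>n. snd s n * snd s n) (\<lambda>n. p ^ (fst s + fst s) * b)"
      using repr_unique[OF repr_mult[OF r r]] repr_of_int sq by simp
    then have "[snd s 1 * snd s 1 = p ^ (fst s + fst s) * b] (mod p)"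
      by (rule seq_cong_imp_cong_1)
    moreover have "p dvd p ^ (fst s + fst s) * b" using k by (simp add: dvd_power)
    ultimately have "p dvd snd s 1 * snd s 1" using cong_dvd_iff by blast
    then have "snd s 1 = 0"
      using prime_p zp_carrier_dvd_1_iff s by (auto simp: Qp_iff prime_dvd_mult_iff)
    then show False using s k by (simp add: Qp_iff)
  qed
  then have r: "repr 0 s (snd s)" using repr_self[OF s, of 0] by simp
  moreover have "seq_cong (\<lambda>n. snd s n ^ 2) (\<lambda>n. b)"
    using repr_unique[OF repr_mult[OF r r]] repr_of_int_0 sq by (simp add: power2_eq_square)
  ultimately show ?thesis ..
qed

lemma sqclass_subset:
  assumes "x \<in> sqclass p c" "c \<in> Qp p"
  shows "sqclass p x \<subseteq> sqclass p c"
proof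
  fix z assume "z \<in> sqclass p x"
  then obtain t where t: "t \<in> Qp p" "t \<noteq> qp_zero" "z = qp_mult p x (qp_mult p t t)"
    unfolding sqclass_def by blast
  obtain u where u: "u \<in> Qp p" "u \<noteq> qp_zero" "x = qp_mult p c (qp_mult p u u)"
    using assms(1) unfolding sqclass_def by blast
  have "z = qp_mult p c (qp_mult p (qp_mult p u u) (qp_mult p t t))"
    using qp_mult_assoc[OF assms(2) qp_mult_in_Qp[OF u(1) u(1)] qp_mult_in_Qp[OF t(1) t(1)]] t(3) u(3)
    by simp
  also have "\<dots> = qp_mult p c (qp_mult p (qp_mult p u t) (qp_mult p u t))"
    using t u by (simp add: qp_mult_squares)
  finally have "z = qp_mult p c (qp_mult p (qp_mult p u t) (qp_mult p u t))" .
  moreover have "qp_mult p u t \<in> Qp p" "qp_mult p u t \<noteq> qp_zero"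
    using t u by (simp_all add: qp_mult_in_Qp qp_mult_nonzero)
  ultimately show "z \<in> sqclass p c" unfolding sqclass_def by blast
qed

text \<open>The witness is \<open>t = p^(j - N) S\<close>, so that \<open>x = c t^2\<close>.\<close>

lemma sqclass_memI:
  assumes x: "repr N x (\<lambda>n. p ^ v * U n)" and c: "repr 0 c (\<lambda>n. p ^ g * C n)"
    and S: "unit_seq S" "seq_cong (\<lambda>n. C n * S n ^ 2) U" and v: "N + v = g + 2 * j"
  shows "x \<in> sqclass p c"
proof -
  obtain t where t: "repr N t (\<lambda>n. p ^ j * S n)" using exists_repr_unit[OF S(1)] by blast
  have "repr (N + N) x (\<lambda>n. p ^ N * (p ^ v * U n))"
    using repr_raise[OF x, of "N + N"] by simp
  moreover have "repr (N + N) (qp_mult p c (qp_mult p t t))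
      (\<lambda>n. p ^ g * C n * (p ^ j * S n * (p ^ j * S n)))"
    using repr_mult[OF c repr_mult[OF t t]] by simp
  moreover have "seq_cong (\<lambda>n. p ^ N * (p ^ v * U n)) (\<lambda>n. p ^ g * C n * (p ^ j * S n * (p ^ j * S n)))"
  proof -
    have "p ^ (N + v) = p ^ g * p ^ j * p ^ j"
      unfolding v by (simp add: power_add mult_2)
    then have "(\<lambda>n. p ^ g * C n * (p ^ j * S n * (p ^ j * S n))) = (\<lambda>n. p ^ (N + v) * (C n * S n ^ 2))"
      by (simp add: power2_eq_square ac_simps)
    then show ?thesis
      using seq_cong_sym[OF seq_cong_smult[OF S(2), of "p ^ (N + v)"]] by (simp add: power_add ac_simps)
  qed
  ultimately have "x = qp_mult p c (qp_mult p t t)" by (rule repr_eqI)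
  moreover have "t \<in> Qp p" "t \<noteq> qp_zero"
    using repr_in_Qp[OF t] repr_unit_nonzero[OF t S(1)] by auto
  ultimately show ?thesis unfolding sqclass_def by blast
qed

subsection \<open>Squares modulo powers of p and Hensel lifting\<close>

lemma cong_square_cancel:
  assumes "\<not> p dvd m" "[c * r ^ 2 = u * m ^ 2] (mod p)"
  shows "\<exists>r'. [c * r' ^ 2 = u] (mod p)"
proof -
  have "coprime m p" using prime_imp_coprime[OF prime_p assms(1)] by (simp add: coprime_commute)
  then obtain i where i: "[m * i = 1] (mod p)" using cong_solve_coprime_int by blast
  have "[c * r ^ 2 * i ^ 2 = u * m ^ 2 * i ^ 2] (mod p)"
    using assms(2) by (rule cong_mult) (rule cong_refl)
  moreover have "[u * (m * i) ^ 2 = u * 1 ^ 2] (mod p)"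
    using i by (intro cong_mult cong_refl cong_pow)
  ultimately have "[c * (r * i) ^ 2 = u] (mod p)"
    by (simp add: power_mult_distrib ac_simps) (metis cong_trans mult.assoc)
  then show ?thesis by blast
qed

lemma cong_power_times_square:
  assumes "\<not> p dvd w" "b < n" "[p ^ a * y ^ 2 = p ^ b * w] (mod p ^ n)"
  shows "a \<le> b \<and> even (b - a) \<and> QuadRes p w"
proof -
  obtain k where k: "p ^ a * y ^ 2 = p ^ b * w + p ^ n * k"
    using assms(3) cong_sym cong_iff_lin by metis
  define w' where "w' = w + p ^ (n - b) * k"
  have pk: "p dvd p ^ (n - b) * k" using assms(2) by (simp add: dvd_power)
  have e: "p ^ a * y ^ 2 = p ^ b * w'"
  proof -
    have "p ^ n = p ^ b * p ^ (n - b)" using assms(2) by (simp add: power_add[symmetric])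
    then show ?thesis using k by (simp add: w'_def algebra_simps)
  qed
  have w': "\<not> p dvd w'" unfolding w'_def using assms(1) pk by (simp add: dvd_add_left_iff)
  then have "y \<noteq> 0" using e p_gt_1 by auto
  then obtain y' where y': "y = p ^ multiplicity p y * y'" "\<not> p dvd y'"
    using multiplicity_decompose' not_prime_unit prime_p by metis
  define c where "c = multiplicity p y"
  have yc: "y = p ^ c * y'" unfolding c_def by (rule y'(1))
  have "y ^ 2 = p ^ (c * 2) * y' ^ 2" by (subst yc) (simp add: power_mult_distrib power_mult)
  then have e2: "p ^ (a + c * 2) * y' ^ 2 = p ^ b * w'" using e by (simp add: power_add)
  have "\<not> p dvd y' ^ 2" using y'(2) prime_dvd_power prime_p by blast
  have ab: "a + c * 2 = b"
  proof (rule ccontr)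
    have False if "p ^ i * u = p ^ j * v" "\<not> p dvd u" "i < j" for i j u v
    proof -
      have "p ^ i * u = p ^ i * (p ^ (j - i) * v)"
        using that(1,3) by (simp add: power_add[symmetric])
      then have "u = p ^ (j - i) * v" using p_gt_1 by simp
      then show False using that(2,3) by (simp add: dvd_power)
    qed
    moreover assume "a + c * 2 \<noteq> b"
    ultimately show False
      using e2 \<open>\<not> p dvd y' ^ 2\<close> w' by (metis linorder_neqE_nat)
  qed
  then have "y' ^ 2 = w'" using e2 p_gt_1 by simp
  then have "[y' ^ 2 = w] (mod p)" using pk by (simp add: w'_def cong_iff_dvd_diff)
  then show ?thesis using ab unfolding QuadRes_def by auto
qed

lemma hensel_step:
  assumes "1 \<le> n" "[c * R ^ 2 = u] (mod p ^ n)" "\<not> p dvd (2 * c * R)"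
  shows "\<exists>R'. [R' = R] (mod p ^ n) \<and> [c * R' ^ 2 = u] (mod p ^ Suc n)"
proof -
  obtain \<delta> where d: "u - c * R ^ 2 = p ^ n * \<delta>"
    using assms(2) by (metis cong_sym cong_iff_dvd_diff dvdE)
  have "coprime (2 * c * R) p"
    using prime_imp_coprime[OF prime_p assms(3)] by (simp add: coprime_commute)
  then obtain i where "[(2 * c * R) * i = 1] (mod p)" using cong_solve_coprime_int by blast
  then have pd: "p dvd (1 - 2 * c * R * i)" by (metis cong_iff_dvd_diff cong_sym)
  define R' where "R' = R + p ^ n * (\<delta> * i)"
  have "u - c * R' ^ 2 = p ^ n * (\<delta> * (1 - 2 * c * R * i)) - p ^ (2 * n) * (c * (\<delta> * i) ^ 2)"
    using d unfolding R'_def by (simp add: power2_eq_square power_mult algebra_simps)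
  moreover have "p ^ Suc n dvd p ^ n * (\<delta> * (1 - 2 * c * R * i))"
    using pd by (simp add: mult_dvd_mono)
  moreover have "p ^ Suc n dvd p ^ (2 * n) * (c * (\<delta> * i) ^ 2)"
    using assms(1) by (intro dvd_mult2 le_imp_power_dvd) simp
  ultimately have "[c * R' ^ 2 = u] (mod p ^ Suc n)"
    by (metis cong_iff_dvd_diff cong_sym dvd_diff)
  moreover have "[R' = R] (mod p ^ n)" by (simp add: R'_def cong_iff_dvd_diff)
  ultimately show ?thesis by blast
qed

lemma hensel_lifting_step:
  assumes p_odd: "\<not> p dvd 2" and C: "unit_seq C" and U: "coherent U" and r: "\<not> p dvd r"
    and R: "[C n * R ^ 2 = U n] (mod p ^ n)" "[R = r] (mod p)"
    and r1: "[C 1 * r ^ 2 = U 1] (mod p)"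
  shows "\<exists>R'. [R' = R] (mod p ^ n) \<and> [R' = r] (mod p)
           \<and> [C (Suc n) * R' ^ 2 = U (Suc n)] (mod p ^ Suc n)"
proof (cases "n = 0")
  case True
  then show ?thesis using r1 by (intro exI[of _ r]) simp
next
  case False
  have "[C (Suc n) * R ^ 2 = C n * R ^ 2] (mod p ^ n)"
    using C by (simp add: unit_seq_def coherent_def cong_mult)
  also note R(1)
  also have "[U n = U (Suc n)] (mod p ^ n)" using U by (simp add: coherent_def cong_sym)
  finally have lift: "[C (Suc n) * R ^ 2 = U (Suc n)] (mod p ^ n)" .
  have "\<not> p dvd R" using R(2) r cong_dvd_iff by blast
  then have "\<not> p dvd (2 * C (Suc n) * R)"
    using p_odd unit_seq_not_dvd[OF C, of "Suc n"] prime_p by (simp add: prime_dvd_mult_iff)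
  then obtain R' where R': "[R' = R] (mod p ^ n)" "[C (Suc n) * R' ^ 2 = U (Suc n)] (mod p ^ Suc n)"
    using hensel_step[OF _ lift] False by auto
  have "[R' = R] (mod p)"
    using cong_dvd_modulus[OF R'(1)] False by (simp add: dvd_power)
  then show ?thesis using R' R(2) cong_trans by blast
qed

lemma hensel_lifting:
  assumes p_odd: "\<not> p dvd 2" and C: "unit_seq C" and U: "unit_seq U"
    and r: "[C 1 * r ^ 2 = U 1] (mod p)"
  shows "\<exists>S. unit_seq S \<and> seq_cong (\<lambda>n. C n * S n ^ 2) U"
proof -
  have r_unit: "\<not> p dvd r"
  proof
    assume "p dvd r"
    then have "p dvd C 1 * r ^ 2" by (simp add: power2_eq_square)
    then show False using r U cong_dvd_iff by (auto simp: unit_seq_def)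
  qed
  define good where "good n R \<longleftrightarrow> [C n * R ^ 2 = U n] (mod p ^ n) \<and> [R = r] (mod p)" for n R
  have step: "\<exists>R'. [R' = R] (mod p ^ n) \<and> good (Suc n) R'" if "good n R" for n R
    using hensel_lifting_step[OF p_odd C _ r_unit, of U n R] U that r
    unfolding good_def unit_seq_def by blast
  define S where "S = rec_nat r (\<lambda>n R. SOME R'. [R' = R] (mod p ^ n) \<and> good (Suc n) R')"
  have S_Suc: "[S (Suc n) = S n] (mod p ^ n) \<and> good (Suc n) (S (Suc n))" if "good n (S n)" for n
    using someI_ex[OF step[OF that]] by (simp add: S_def)
  have good: "good n (S n)" for n
  proof (induction n)
    case 0
    show ?case by (simp add: S_def good_def)
  next
    case (Suc n)
    then show ?case using S_Suc by blast
  qed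
  have "coherent S" using S_Suc good by (simp add: coherent_def)
  moreover have "\<not> p dvd S 1"
    using good[of 1] r_unit cong_dvd_iff unfolding good_def by blast
  moreover have "seq_cong (\<lambda>n. C n * S n ^ 2) U"
    using good by (simp add: good_def seq_cong_def)
  ultimately show ?thesis unfolding unit_seq_def by blast
qed

subsection \<open>Points of y^2 = x^3 + a x^2 + b x\<close>

definition qp_cubic :: "int \<Rightarrow> int \<Rightarrow> qp \<Rightarrow> qp" where
  "qp_cubic a b x = qp_add p (qp_mult p x (qp_mult p x x))
     (qp_add p (qp_mult p (qp_of_int p a) (qp_mult p x x)) (qp_mult p (qp_of_int p b) x))"

text \<open>\<open>scaled_cubic a b N X = p^(3N) f(X / p^N)\<close> for \<open>f(x) = x^3 + a x^2 + b x\<close>.\<close>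

definition scaled_cubic :: "int \<Rightarrow> int \<Rightarrow> nat \<Rightarrow> int \<Rightarrow> int" where
  "scaled_cubic a b N X = X ^ 3 + a * p ^ N * X ^ 2 + b * p ^ (2 * N) * X"

lemma qp_points_Some_iff:
  "Some (x, y) \<in> qp_points p a b \<longleftrightarrow> x \<in> Qp p \<and> y \<in> Qp p \<and> qp_mult p y y = qp_cubic a b x"
  unfolding qp_points_def qp_cubic_def by (simp del: split_paired_Ex)

lemma repr_qp_cubic:
  assumes "repr N x X"
  shows "repr (3 * N) (qp_cubic a b x) (\<lambda>n. scaled_cubic a b N (X n))"
proof -
  have N3: "3 * N = N + (N + N)" by simp
  have xx: "repr (N + N) (qp_mult p x x) (\<lambda>n. X n * X n)" by (rule repr_mult[OF assms assms])
  have "repr (3 * N) (qp_mult p x (qp_mult p x x)) (\<lambda>n. X n ^ 3)"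
    using repr_mult[OF assms xx] by (simp only: N3 power3_eq_cube mult.assoc)
  moreover have "repr (3 * N) (qp_mult p (qp_of_int p a) (qp_mult p x x)) (\<lambda>n. a * p ^ N * X n ^ 2)"
    using repr_raise[OF repr_mult[OF repr_of_int_0 xx], of "3 * N"]
    by (simp add: N3 power2_eq_square ac_simps)
  moreover have "repr (3 * N) (qp_mult p (qp_of_int p b) x) (\<lambda>n. b * p ^ (2 * N) * X n)"
    using repr_raise[OF repr_mult[OF repr_of_int_0 assms], of "3 * N"] by (simp add: ac_simps)
  ultimately show ?thesis
    unfolding qp_cubic_def scaled_cubic_def by (auto intro!: repr_add simp: add.assoc)
qed

lemma curve_repr:
  assumes "Some (x, y) \<in> qp_points p a b" "repr N x X" "repr N y Y"
  shows "seq_cong (\<lambda>n. p ^ N * Y n ^ 2) (\<lambda>n. scaled_cubic a b N (X n))"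
proof -
  have "repr (3 * N) (qp_mult p y y) (\<lambda>n. p ^ N * Y n ^ 2)"
    using repr_raise[OF repr_mult[OF assms(3) assms(3)], of "3 * N"]
    by (simp add: power2_eq_square)
  moreover have "qp_mult p y y = qp_cubic a b x" using assms(1) qp_points_Some_iff by blast
  ultimately show ?thesis using repr_unique[OF _ repr_qp_cubic[OF assms(2)]] by simp
qed

lemma None_in_qp_points: "None \<in> qp_points p a b"
  by (simp add: qp_points_def)

lemma two_torsion_in_qp_points:
  assumes "repr 0 x X" "seq_cong (\<lambda>n. scaled_cubic a b 0 (X n)) (\<lambda>n. 0)"
  shows "Some (x, qp_zero) \<in> qp_points p a b"
proof -
  have "repr 0 (qp_mult p qp_zero qp_zero) (\<lambda>n. 0)" using repr_mult[OF repr_zero[of 0] repr_zero[of 0]] by simp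
  moreover have "repr 0 (qp_cubic a b x) (\<lambda>n. 0)"
    using repr_seq_cong[OF repr_qp_cubic[OF assms(1)] assms(2)] by simp
  ultimately have "qp_mult p qp_zero qp_zero = qp_cubic a b x" by (rule repr_eqI) simp
  then show ?thesis using repr_in_Qp[OF assms(1)] repr_in_Qp[OF repr_zero]
    unfolding qp_points_Some_iff by blast
qed

lemma sqclass_mem_of_cong:
  assumes p_odd: "\<not> p dvd 2" and x: "repr N x (\<lambda>n. p ^ v * U n)" "unit_seq U"
    and c: "repr 0 c (\<lambda>n. p ^ g * C n)" "unit_seq C"
    and r: "[C 1 * r ^ 2 = U 1] (mod p)" and v: "N + v = g + 2 * j"
  shows "x \<in> sqclass p c"
proof -
  obtain S where "unit_seq S" "seq_cong (\<lambda>n. C n * S n ^ 2) U"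
    using hensel_lifting[OF p_odd c(2) x(2) r] by blast
  then show ?thesis using sqclass_memI[OF x(1) c(1) _ _ v] by blast
qed

end

section \<open>The twist E'^d at a prime dividing d\<close>

locale twist_at_p = padic_prime +
  fixes A B d d0 :: int
  assumes p_odd: "\<not> p dvd 2"
    and B_unit: "\<not> p dvd B"
    and disc'_unit: "\<not> p dvd (A ^ 2 - 4 * B)"
    and d_eq: "d = p * d0"
    and d0_unit: "\<not> p dvd d0"
begin

abbreviation twist_points :: "(qp \<times> qp) option set" where
  "twist_points \<equiv> qp_points p (-2 * d * A) (d ^ 2 * (A ^ 2 - 4 * B))"

abbreviation twist_cubic :: "nat \<Rightarrow> int \<Rightarrow> int" where
  "twist_cubic \<equiv> scaled_cubic (-2 * d * A) (d ^ 2 * (A ^ 2 - 4 * B))"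

lemma p_not_dvd_4: "\<not> p dvd 4"
  using p_odd prime_p prime_dvd_mult_iff[of p 2 2] by simp

lemma disc_unit: "\<not> p dvd disc A B"
proof -
  have "\<not> p dvd 16" using p_not_dvd_4 prime_p prime_dvd_mult_iff[of p 4 4] by simp
  then show ?thesis
    using B_unit disc'_unit prime_p by (simp add: disc_def prime_dvd_mult_iff prime_dvd_power_iff)
qed

lemma disc_square_class_cong:
  assumes "[r ^ 2 = u * d0 ^ 2 * (A ^ 2 - 4 * B)] (mod p)"
  shows "\<exists>r'. [disc A B * r' ^ 2 = u] (mod p)"
proof -
  have "[disc A B * r ^ 2 = disc A B * (u * d0 ^ 2 * (A ^ 2 - 4 * B))] (mod p)"
    using assms by (rule cong_mult[OF cong_refl])
  also have "disc A B * (u * d0 ^ 2 * (A ^ 2 - 4 * B)) = u * (4 * B * d0 * (A ^ 2 - 4 * B)) ^ 2"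
    by (simp add: disc_def power2_eq_square algebra_simps)
  finally have "[disc A B * r ^ 2 = u * (4 * B * d0 * (A ^ 2 - 4 * B)) ^ 2] (mod p)" .
  moreover have "\<not> p dvd 4 * B * d0 * (A ^ 2 - 4 * B)"
    using p_not_dvd_4 B_unit d0_unit disc'_unit prime_p by (simp add: prime_dvd_mult_iff)
  ultimately show ?thesis by (rule cong_square_cancel[rotated])
qed

text \<open>In the next three lemmas \<open>p^(v - N) U\<close> is the x-coordinate of a point of \<open>E'^d\<close>, and
  \<open>H\<close> is its equation \<open>y^2 = x^3 - 2dA x^2 + d^2 (A^2 - 4B) x\<close> multiplied by \<open>p^(3N)\<close>.\<close>

lemma twist_point_small_valuation:
  assumes U: "unit_seq U" and v: "v \<le> N"
    and H: "\<And>n. [p ^ N * Y n ^ 2 = twist_cubic N (p ^ v * U n)] (mod p ^ n)"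
  shows "even (N - v) \<and> QuadRes p (U 1)"
proof -
  define m where "m = N - v"
  have N: "N = v + m" using v m_def by simp
  define n0 where "n0 = 3 * v + 1"
  define W where "W = U n0 ^ 3 + p * (p ^ m * (-2 * d0 * A) * U n0 ^ 2
                      + p ^ (2 * m + 1) * d0 ^ 2 * (A ^ 2 - 4 * B) * U n0)"
  have pw: "p ^ N = p ^ v * p ^ m" "p ^ (2 * N) = (p ^ v) ^ 2 * (p ^ m) ^ 2"
    "p ^ (3 * v) = (p ^ v) ^ 3" "p ^ (2 * m + 1) = p * (p ^ m) ^ 2"
    unfolding N by (simp_all add: power_add power_mult_distrib) (simp_all add: power_mult[symmetric] mult.commute)
  have "twist_cubic N (p ^ v * U n0) = p ^ (3 * v) * W"
    unfolding W_def scaled_cubic_def d_eq pw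
    by (simp add: power_mult_distrib power2_eq_square power3_eq_cube algebra_simps)
  then have cong: "[p ^ N * Y n0 ^ 2 = p ^ (3 * v) * W] (mod p ^ n0)" using H[of n0] by simp
  have "\<not> p dvd U n0" using unit_seq_not_dvd[OF U] n0_def by simp
  then have "\<not> p dvd U n0 ^ 3" using prime_dvd_power prime_p by blast
  then have "\<not> p dvd W" unfolding W_def by (simp add: dvd_add_left_iff)
  moreover have "3 * v < n0" by (simp add: n0_def)
  ultimately have T: "N \<le> 3 * v \<and> even (3 * v - N) \<and> QuadRes p W"
    using cong_power_times_square cong by blast
  then obtain r where "[r ^ 2 = W] (mod p)" unfolding QuadRes_def by blast
  moreover have "[W = U n0 * U n0 ^ 2] (mod p)"
    unfolding W_def by (simp add: cong_iff_dvd_diff power2_eq_square power3_eq_cube)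
  moreover have "[U n0 * U n0 ^ 2 = U 1 * U 1 ^ 2] (mod p)"
    using unit_seq_cong_1[OF U, of n0] n0_def by (simp add: cong_mult cong_pow)
  ultimately have "[1 * r ^ 2 = U 1 * U 1 ^ 2] (mod p)" by (metis cong_trans mult_1)
  then obtain r' where "[1 * r' ^ 2 = U 1] (mod p)"
    using cong_square_cancel U unit_seq_def by blast
  then have "QuadRes p (U 1)" unfolding QuadRes_def by auto
  moreover have "even m" using conjunct1[OF T] conjunct1[OF conjunct2[OF T]] N by presburger
  ultimately show ?thesis using m_def by simp
qed

lemma twist_point_valuation_one:
  assumes U: "unit_seq U"
    and H: "\<And>n. [p ^ N * Y n ^ 2 = twist_cubic N (p ^ (N + 1) * U n)] (mod p ^ n)"
  shows "p dvd U 1 ^ 2 - 2 * d0 * A * U 1 + d0 ^ 2 * (A ^ 2 - 4 * B)"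
proof -
  define n0 where "n0 = 3 * N + 4"
  define Q where "Q = U n0 ^ 2 - 2 * d0 * A * U n0 + d0 ^ 2 * (A ^ 2 - 4 * B)"
  have pw: "p ^ (N + 1) = p * p ^ N" "p ^ (2 * N) = (p ^ N) ^ 2" "p ^ (3 * N + 3) = p ^ 3 * (p ^ N) ^ 3"
    by (simp_all add: power_add) (simp_all add: power_mult[symmetric] mult.commute)
  have "twist_cubic N (p ^ (N + 1) * U n0) = p ^ (3 * N + 3) * (U n0 * Q)"
    unfolding Q_def scaled_cubic_def d_eq pw
    by (simp add: power_mult_distrib power2_eq_square power3_eq_cube algebra_simps)
  then have cong: "[p ^ N * Y n0 ^ 2 = p ^ (3 * N + 3) * (U n0 * Q)] (mod p ^ n0)"
    using H[of n0] by simp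
  have "p dvd U n0 * Q"
  proof (rule ccontr)
    assume "\<not> p dvd U n0 * Q"
    moreover have "3 * N + 3 < n0" by (simp add: n0_def)
    ultimately have "even (3 * N + 3 - N)" using cong_power_times_square cong by blast
    then show False by presburger
  qed
  moreover have "\<not> p dvd U n0" using unit_seq_not_dvd[OF U] n0_def by simp
  ultimately have "p dvd Q" using prime_p by (simp add: prime_dvd_mult_iff)
  moreover have "[Q = U 1 ^ 2 - 2 * d0 * A * U 1 + d0 ^ 2 * (A ^ 2 - 4 * B)] (mod p)"
    unfolding Q_def using unit_seq_cong_1[OF U, of n0] n0_def
    by (intro cong_add cong_diff cong_mult cong_pow cong_refl) simp_all
  ultimately show ?thesis using cong_dvd_iff by blast
qed

lemma twist_point_large_valuation:
  assumes U: "unit_seq U" and v: "N + 2 \<le> v"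
    and H: "\<And>n. [p ^ N * Y n ^ 2 = twist_cubic N (p ^ v * U n)] (mod p ^ n)"
  shows "even (v - N) \<and> (\<exists>r. [disc A B * r ^ 2 = U 1] (mod p))"
proof -
  define m where "m = v - N - 2"
  have v_eq: "v = N + 2 + m" using v m_def by simp
  define n0 where "n0 = v + 2 * N + 3"
  define W where "W = U n0 * d0 ^ 2 * (A ^ 2 - 4 * B)
                      + p * (U n0 * (p ^ (2 * m + 1) * U n0 ^ 2 - 2 * p ^ m * d0 * A * U n0))"
  have pw: "p ^ v = p * p * p ^ N * p ^ m" "p ^ (2 * N) = (p ^ N) ^ 2"
    "p ^ (v + 2 * N + 2) = p * p * p * p * (p ^ N) ^ 3 * p ^ m" "p ^ (2 * m + 1) = p * (p ^ m) ^ 2"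
    unfolding v_eq by (simp_all add: power_add power_mult_distrib)
      (simp_all add: power_mult[symmetric] mult.commute)
  have "twist_cubic N (p ^ v * U n0) = p ^ (v + 2 * N + 2) * W"
    unfolding W_def scaled_cubic_def d_eq pw
    by (simp add: power_mult_distrib power2_eq_square power3_eq_cube algebra_simps)
  then have cong: "[p ^ N * Y n0 ^ 2 = p ^ (v + 2 * N + 2) * W] (mod p ^ n0)"
    using H[of n0] by simp
  have "\<not> p dvd U n0" using unit_seq_not_dvd[OF U] n0_def by simp
  then have "\<not> p dvd U n0 * d0 ^ 2 * (A ^ 2 - 4 * B)"
    using d0_unit disc'_unit prime_p by (simp add: prime_dvd_mult_iff prime_dvd_power_iff)
  then have "\<not> p dvd W" unfolding W_def by (simp add: dvd_add_left_iff)
  moreover have "v + 2 * N + 2 < n0" by (simp add: n0_def)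
  ultimately have T: "even (v + 2 * N + 2 - N) \<and> QuadRes p W"
    using cong_power_times_square cong by blast
  then obtain r where "[r ^ 2 = W] (mod p)" unfolding QuadRes_def by blast
  moreover have "[W = U n0 * d0 ^ 2 * (A ^ 2 - 4 * B)] (mod p)"
    unfolding W_def by (simp add: cong_iff_dvd_diff)
  moreover have "[U n0 * d0 ^ 2 * (A ^ 2 - 4 * B) = U 1 * d0 ^ 2 * (A ^ 2 - 4 * B)] (mod p)"
    using unit_seq_cong_1[OF U, of n0] n0_def by (simp add: cong_mult)
  ultimately have "[r ^ 2 = U 1 * d0 ^ 2 * (A ^ 2 - 4 * B)] (mod p)" using cong_trans by blast
  then have "\<exists>r. [disc A B * r ^ 2 = U 1] (mod p)" by (rule disc_square_class_cong)
  moreover have "even (v - N)" using conjunct1[OF T] v_eq by presburger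
  ultimately show ?thesis by blast
qed

lemma twist_point_x_cases:
  assumes pt: "Some (x, y) \<in> twist_points" and x0: "x \<noteq> qp_zero"
  shows "x \<in> sqclass p (qp_of_int p 1) \<or> x \<in> sqclass p (qp_of_int p (disc A B))
    \<or> (\<exists>N U. repr N x (\<lambda>n. p ^ (N + 1) * U n) \<and> unit_seq U
          \<and> p dvd U 1 ^ 2 - 2 * d0 * A * U 1 + d0 ^ 2 * (A ^ 2 - 4 * B))"
proof -
  have xy: "x \<in> Qp p" "y \<in> Qp p" using pt qp_points_Some_iff by blast+
  define N where "N = fst x + fst y"
  obtain i U where xi: "repr (fst x) x (\<lambda>n. p ^ i * U n)" and U: "unit_seq U"
    using qp_nonzero_repr[OF xy(1) x0] by blast
  define v where "v = N - fst x + i"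
  have x: "repr N x (\<lambda>n. p ^ v * U n)"
    using repr_raise[OF xi, of N] by (simp add: N_def v_def power_add mult.assoc)
  obtain Y where Y: "repr N y Y" using repr_self[OF xy(2), of N] N_def by auto
  have H: "[p ^ N * Y n ^ 2 = twist_cubic N (p ^ v * U n)] (mod p ^ n)" for n
    using curve_repr[OF pt x Y] by (simp add: seq_cong_def)
  have one: "repr 0 (qp_of_int p 1) (\<lambda>n. p ^ 0 * 1)" using repr_of_int_0 by simp
  have disc: "repr 0 (qp_of_int p (disc A B)) (\<lambda>n. p ^ 0 * disc A B)" using repr_of_int_0 by simp
  consider "v \<le> N" | "v = N + 1" | "N + 2 \<le> v" by linarith
  then show ?thesis
  proof cases
    case 1
    have T: "even (N - v) \<and> QuadRes p (U 1)" by (rule twist_point_small_valuation[OF U 1 H])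
    then obtain h where "N - v = 2 * h" by (meson evenE)
    then have j: "N + v = 0 + 2 * (v + h)" using 1 by simp
    obtain r where "[1 * r ^ 2 = U 1] (mod p)" using T unfolding QuadRes_def by auto
    then have "x \<in> sqclass p (qp_of_int p 1)"
      by (rule sqclass_mem_of_cong[OF p_odd x U one unit_seq_const[OF p_not_dvd_1] _ j])
    then show ?thesis by blast
  next
    case 2
    then show ?thesis using twist_point_valuation_one[OF U] x H U by blast
  next
    case 3
    have T: "even (v - N) \<and> (\<exists>r. [disc A B * r ^ 2 = U 1] (mod p))"
      by (rule twist_point_large_valuation[OF U 3 H])
    then obtain h where "v - N = 2 * h" by (meson evenE)
    then have j: "N + v = 0 + 2 * (N + h)" using 3 by simp
    obtain r where "[disc A B * r ^ 2 = U 1] (mod p)" using T by blast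
    then have "x \<in> sqclass p (qp_of_int p (disc A B))"
      by (rule sqclass_mem_of_cong[OF p_odd x U disc unit_seq_const[OF disc_unit] _ j])
    then show ?thesis by blast
  qed
qed

lemma sqclass_x_subset_W:
  assumes "Some (x, y) \<in> twist_points" "x \<noteq> qp_zero"
  shows "sqclass p x \<subseteq> W p A B d"
  using assms unfolding W_def by (force simp: kummer_def)

lemma sqclass_one_subset_W: "sqclass p (qp_of_int p 1) \<subseteq> W p A B d"
  using None_in_qp_points unfolding W_def by (force simp: kummer_def)

lemma sqclass_disc_subset_W: "sqclass p (qp_of_int p (disc A B)) \<subseteq> W p A B d"
proof -
  have "Some (qp_zero, qp_zero) \<in> twist_points"
    by (rule two_torsion_in_qp_points[OF repr_zero]) (simp add: scaled_cubic_def)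
  then show ?thesis unfolding W_def by (force simp: kummer_def)
qed

lemma W_subset:
  assumes "sqclass p (qp_of_int p 1) \<subseteq> T" "sqclass p (qp_of_int p (disc A B)) \<subseteq> T"
    and "\<And>x y. Some (x, y) \<in> twist_points \<Longrightarrow> x \<noteq> qp_zero \<Longrightarrow> sqclass p x \<subseteq> T"
  shows "W p A B d \<subseteq> T"
  unfolding W_def
proof (intro UN_least)
  fix P assume P: "P \<in> twist_points"
  show "sqclass p (kummer p A B P) \<subseteq> T"
  proof (cases P)
    case None
    then show ?thesis using assms(1) by (simp add: kummer_def)
  next
    case (Some xy)
    obtain x y where xy: "xy = (x, y)" by (cases xy)
    then show ?thesis
      using assms(2) assms(3)[of x y] P Some by (cases "x = qp_zero") (simp_all add: kummer_def)
  qed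
qed

lemma QuadRes_of_twist_root:
  assumes "p dvd u ^ 2 - 2 * d0 * A * u + d0 ^ 2 * (A ^ 2 - 4 * B)"
  shows "QuadRes p B"
proof -
  have "u ^ 2 - 2 * d0 * A * u + d0 ^ 2 * (A ^ 2 - 4 * B) = (u - d0 * A) ^ 2 - B * (2 * d0) ^ 2"
    by (simp add: power2_eq_square algebra_simps)
  then have "[1 * (u - d0 * A) ^ 2 = B * (2 * d0) ^ 2] (mod p)"
    using assms by (simp add: cong_iff_dvd_diff)
  moreover have "\<not> p dvd 2 * d0" using p_odd d0_unit prime_p by (simp add: prime_dvd_mult_iff)
  ultimately show ?thesis using cong_square_cancel unfolding QuadRes_def by fastforce
qed

lemma W_nonresidue:
  assumes "\<not> QuadRes p B"
  shows "W p A B d = sq_span1 p (qp_of_int p (disc A B))"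
proof
  show "sq_span1 p (qp_of_int p (disc A B)) \<subseteq> W p A B d"
    unfolding sq_span1_def using sqclass_one_subset_W sqclass_disc_subset_W by blast
  show "W p A B d \<subseteq> sq_span1 p (qp_of_int p (disc A B))"
  proof (rule W_subset)
    fix x y assume pt: "Some (x, y) \<in> twist_points" "x \<noteq> qp_zero"
    have "x \<in> sqclass p (qp_of_int p 1) \<or> x \<in> sqclass p (qp_of_int p (disc A B))"
      using twist_point_x_cases[OF pt] QuadRes_of_twist_root assms by blast
    then show "sqclass p x \<subseteq> sq_span1 p (qp_of_int p (disc A B))"
      using sqclass_subset repr_in_Qp[OF repr_of_int_0] unfolding sq_span1_def by blast
  qed (auto simp: sq_span1_def)
qed

end

subsection \<open>The case where B is a square in Q_p\<close>

locale split_twist_at_p = twist_at_p +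
  fixes s :: qp
  assumes s_in_Qp: "s \<in> Qp p" and s_square: "qp_mult p s s = qp_of_int p B"
begin

abbreviation root :: "nat \<Rightarrow> int" where
  "root \<equiv> snd s"

lemma repr_root: "repr 0 s root"
  and root_square: "seq_cong (\<lambda>n. root n ^ 2) (\<lambda>n. B)"
  using repr_square_root[OF s_in_Qp s_square B_unit] by auto

lemma root_square_cong: "p dvd root 1 ^ 2 - B"
  using seq_cong_imp_cong_1[OF root_square] by (simp add: cong_iff_dvd_diff)

text \<open>\<open>torsion_x 2\<close> and \<open>torsion_x (-2)\<close> are the x-coordinates \<open>d (A \<plusminus> 2 \<surd>B)\<close> of the
  2-torsion points of \<open>E'^d\<close> other than (0,0).\<close>

definition torsion_x :: "int \<Rightarrow> qp" where
  "torsion_x c = qp_mult p (qp_of_int p d) (qp_add p (qp_of_int p A) (qp_mult p (qp_of_int p c) s))"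

lemma repr_root_shift: "repr 0 (qp_add p (qp_of_int p a) (qp_mult p (qp_of_int p c) s)) (\<lambda>n. a + c * root n)"
proof -
  have "repr 0 (qp_mult p (qp_of_int p c) s) (\<lambda>n. c * root n)"
    using repr_mult[OF repr_of_int_0 repr_root] by simp
  then show ?thesis using repr_add[OF repr_of_int_0] by blast
qed

lemma repr_torsion_x: "repr 0 (torsion_x c) (\<lambda>n. d * (A + c * root n))"
  unfolding torsion_x_def using repr_mult[OF repr_of_int_0 repr_root_shift] by simp

lemma repr_torsion_x_p: "repr 0 (torsion_x c) (\<lambda>n. p ^ 1 * (d0 * (A + c * root n)))"
  using repr_torsion_x by (simp add: d_eq mult.assoc)

lemma root_shift_unit:
  assumes "c * c = 4"
  shows "\<not> p dvd A + c * root 1"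
proof
  assume "p dvd A + c * root 1"
  then have "p dvd (A + c * root 1) * (A - c * root 1) + 4 * (root 1 ^ 2 - B)"
    using root_square_cong by (metis dvd_add dvd_mult dvd_mult2)
  also have "(A + c * root 1) * (A - c * root 1) + 4 * (root 1 ^ 2 - B) = A ^ 2 - 4 * B"
    using assms by (simp add: power2_eq_square algebra_simps)
  finally show False using disc'_unit by simp
qed

lemma unit_seq_root_shift:
  assumes "\<not> p dvd k" "c * c = 4"
  shows "unit_seq (\<lambda>n. k * (A + c * root n))"
  unfolding unit_seq_def
  using assms root_shift_unit prime_p repr_coherent[OF repr_root]
  by (simp add: coherent_smult coherent_add coherent_const prime_dvd_mult_iff)

lemma torsion_x_nonzero: "c * c = 4 \<Longrightarrow> torsion_x c \<noteq> qp_zero"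
  using repr_unit_nonzero[OF repr_torsion_x_p unit_seq_root_shift[OF d0_unit]] by blast

lemma torsion_x_point:
  assumes "c * c = 4"
  shows "Some (torsion_x c, qp_zero) \<in> twist_points"
proof (rule two_torsion_in_qp_points[OF repr_torsion_x])
  have "twist_cubic 0 (d * (A + c * root n))
      = 4 * d ^ 2 * (d * (A + c * root n)) * (root n ^ 2 - B)
        + d ^ 3 * (A + c * root n) * root n ^ 2 * (c * c - 4)" for n
    by (simp add: scaled_cubic_def power2_eq_square power3_eq_cube algebra_simps)
  then have "(\<lambda>n. twist_cubic 0 (d * (A + c * root n)))
      = (\<lambda>n. 4 * d ^ 2 * (d * (A + c * root n)) * (root n ^ 2 - B))"
    using assms by simp
  then show "seq_cong (\<lambda>n. twist_cubic 0 (d * (A + c * root n))) (\<lambda>n. 0)"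
    using seq_cong_zero_factor[OF root_square] by simp
qed

lemma disc_torsion_x_in_sqclass:
  "qp_mult p (qp_of_int p (disc A B)) (torsion_x 2) \<in> sqclass p (torsion_x (-2))"
proof -
  define w where "w = qp_mult p (qp_of_int p (4 * B)) (qp_add p (qp_of_int p A) (qp_mult p (qp_of_int p 2) s))"
  have w: "repr 0 w (\<lambda>n. p ^ 0 * (4 * B * (A + 2 * root n)))"
    unfolding w_def using repr_mult[OF repr_of_int_0 repr_root_shift] by simp
  have "\<not> p dvd 4 * B" using p_not_dvd_4 B_unit prime_p by (simp add: prime_dvd_mult_iff)
  then have "w \<noteq> qp_zero"
    using repr_unit_nonzero[OF w unit_seq_root_shift] by simp
  have "qp_mult p (qp_of_int p (disc A B)) (torsion_x 2) = qp_mult p (torsion_x (-2)) (qp_mult p w w)"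
  proof (rule repr_eqI)
    show "repr 0 (qp_mult p (qp_of_int p (disc A B)) (torsion_x 2))
        (\<lambda>n. disc A B * (d * (A + 2 * root n)))"
      using repr_mult[OF repr_of_int_0 repr_torsion_x] by simp
    show "repr 0 (qp_mult p (torsion_x (-2)) (qp_mult p w w))
        (\<lambda>n. d * (A - 2 * root n) * (4 * B * (A + 2 * root n)) ^ 2)"
      using repr_mult[OF repr_torsion_x[of "-2"] repr_mult[OF w w]] by (simp add: power2_eq_square)
    have "(\<lambda>n. disc A B * (d * (A + 2 * root n))) = (\<lambda>n. d * (A - 2 * root n) * (4 * B * (A + 2 * root n)) ^ 2
        + 64 * B ^ 2 * d * (A + 2 * root n) * (root n ^ 2 - B))"
      by (simp add: fun_eq_iff disc_def power2_eq_square algebra_simps)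
    then show "seq_cong (\<lambda>n. disc A B * (d * (A + 2 * root n)))
        (\<lambda>n. d * (A - 2 * root n) * (4 * B * (A + 2 * root n)) ^ 2)"
      using seq_cong_add[OF seq_cong_refl seq_cong_zero_factor[OF root_square]] by simp
  qed
  then show ?thesis
    using repr_in_Qp[OF w] \<open>w \<noteq> qp_zero\<close> unfolding sqclass_def by blast
qed

lemma conj_root_cong:
  assumes "[u = d0 * (A - 2 * root 1)] (mod p)"
  obtains r where "[disc A B * (d0 * (A + 2 * root 1)) * r ^ 2 = u] (mod p)"
proof -
  define m where "m = 4 * B * (A + 2 * root 1)"
  have "\<not> p dvd 4 * B" using p_not_dvd_4 B_unit prime_p by (simp add: prime_dvd_mult_iff)
  then have m: "\<not> p dvd m"
    unfolding m_def using root_shift_unit[of 2] prime_p by (simp add: prime_dvd_mult_iff)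
  have "[u * m ^ 2 = d0 * (A - 2 * root 1) * m ^ 2] (mod p)" using assms by (simp add: cong_mult)
  also have "d0 * (A - 2 * root 1) * m ^ 2 = disc A B * (d0 * (A + 2 * root 1)) * 1 ^ 2
      - 64 * B ^ 2 * d0 * (A + 2 * root 1) * (root 1 ^ 2 - B)"
    by (simp add: m_def disc_def power2_eq_square algebra_simps)
  also have "[\<dots> = disc A B * (d0 * (A + 2 * root 1)) * 1 ^ 2] (mod p)"
    using root_square_cong by (simp add: cong_iff_dvd_diff)
  finally show ?thesis using cong_square_cancel[OF m] cong_sym that by blast
qed

lemma valuation_one_x_in_sqclass:
  assumes x: "repr N x (\<lambda>n. p ^ (N + 1) * U n)" and U: "unit_seq U"
    and dvd: "p dvd U 1 ^ 2 - 2 * d0 * A * U 1 + d0 ^ 2 * (A ^ 2 - 4 * B)"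
  shows "x \<in> sqclass p (torsion_x 2) \<or> x \<in> sqclass p (qp_mult p (qp_of_int p (disc A B)) (torsion_x 2))"
proof -
  let ?r = "root 1"
  have "U 1 ^ 2 - 2 * d0 * A * U 1 + d0 ^ 2 * (A ^ 2 - 4 * B)
      = (U 1 - d0 * (A + 2 * ?r)) * (U 1 - d0 * (A - 2 * ?r)) + 4 * d0 ^ 2 * (?r ^ 2 - B)"
    by (simp add: power2_eq_square algebra_simps)
  then have "p dvd (U 1 - d0 * (A + 2 * ?r)) * (U 1 - d0 * (A - 2 * ?r))"
    using dvd root_square_cong by (simp add: dvd_add_left_iff)
  then consider "[d0 * (A + 2 * ?r) * 1 ^ 2 = U 1] (mod p)" | "[U 1 = d0 * (A - 2 * ?r)] (mod p)"
    using prime_p by (auto simp: prime_dvd_mult_iff cong_iff_dvd_diff dvd_diff_commute)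
  then show ?thesis
  proof cases
    case 1
    have "unit_seq (\<lambda>n. d0 * (A + 2 * root n))" using unit_seq_root_shift[OF d0_unit] by simp
    then have "x \<in> sqclass p (torsion_x 2)"
      by (rule sqclass_mem_of_cong[OF p_odd x U repr_torsion_x_p _ 1, of N]) simp
    then show ?thesis ..
  next
    case 2
    then obtain r where r: "[disc A B * (d0 * (A + 2 * ?r)) * r ^ 2 = U 1] (mod p)"
      by (rule conj_root_cong)
    have c: "repr 0 (qp_mult p (qp_of_int p (disc A B)) (torsion_x 2))
        (\<lambda>n. p ^ 1 * (disc A B * (d0 * (A + 2 * root n))))"
      using repr_mult[OF repr_of_int_0 repr_torsion_x_p, of "disc A B" 2] by (simp add: ac_simps)
    have "unit_seq (\<lambda>n. disc A B * (d0 * (A + 2 * root n)))"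
      using unit_seq_root_shift[of "disc A B * d0" 2] disc_unit d0_unit prime_p
      by (simp add: prime_dvd_mult_iff mult.assoc)
    then have "x \<in> sqclass p (qp_mult p (qp_of_int p (disc A B)) (torsion_x 2))"
      using sqclass_mem_of_cong[OF p_odd x U c _ r, of N] by simp
    then show ?thesis ..
  qed
qed

theorem W_split: "W p A B d = sq_span2 p (qp_of_int p (disc A B)) (torsion_x 2)"
proof
  have torsion_x_subset_W: "sqclass p (torsion_x c) \<subseteq> W p A B d" if "c * c = 4" for c
    using sqclass_x_subset_W[OF torsion_x_point torsion_x_nonzero] that by blast
  have "sqclass p (qp_mult p (qp_of_int p (disc A B)) (torsion_x 2)) \<subseteq> sqclass p (torsion_x (-2))"
    by (rule sqclass_subset[OF disc_torsion_x_in_sqclass repr_in_Qp[OF repr_torsion_x]])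
  then show "sq_span2 p (qp_of_int p (disc A B)) (torsion_x 2) \<subseteq> W p A B d"
    unfolding sq_span2_def
    using sqclass_one_subset_W sqclass_disc_subset_W torsion_x_subset_W[of 2] torsion_x_subset_W[of "-2"]
    by simp
  show "W p A B d \<subseteq> sq_span2 p (qp_of_int p (disc A B)) (torsion_x 2)"
  proof (rule W_subset)
    fix x y assume "Some (x, y) \<in> twist_points" "x \<noteq> qp_zero"
    then have "x \<in> sqclass p (qp_of_int p 1) \<or> x \<in> sqclass p (qp_of_int p (disc A B))
        \<or> x \<in> sqclass p (torsion_x 2) \<or> x \<in> sqclass p (qp_mult p (qp_of_int p (disc A B)) (torsion_x 2))"
      using twist_point_x_cases valuation_one_x_in_sqclass by blast
    moreover have "qp_of_int p a \<in> Qp p" for a using repr_in_Qp[OF repr_of_int_0] .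
    moreover have "torsion_x 2 \<in> Qp p" using repr_in_Qp[OF repr_torsion_x] .
    ultimately show "sqclass p x \<subseteq> sq_span2 p (qp_of_int p (disc A B)) (torsion_x 2)"
      unfolding sq_span2_def by (metis le_supI1 le_supI2 qp_mult_in_Qp sqclass_subset)
  qed (unfold sq_span2_def; blast)+
qed

end

lemma coprime_two_disc_units:
  fixes A B p :: int
  assumes "prime p" "coprime p (2 * disc A B)"
  shows "\<not> p dvd 2" "\<not> p dvd B" "\<not> p dvd (A ^ 2 - 4 * B)"
proof -
  have "\<not> p dvd 2 * disc A B"
  proof
    assume "p dvd 2 * disc A B"
    then have "is_unit p" by (rule coprime_common_divisor[OF assms(2) dvd_refl])
    then show False using assms(1) not_prime_unit by blast
  qed
  then have not_dvd: "\<not> p dvd x" if "x dvd 2 * disc A B" for x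
    using that dvd_trans by blast
  show "\<not> p dvd 2" "\<not> p dvd B" "\<not> p dvd (A ^ 2 - 4 * B)"
    by (rule not_dvd; simp add: disc_def power2_eq_square)+
qed

lemma squarefree_exact_prime_factor:
  fixes d p :: int
  assumes "squarefree d" "prime p" "p dvd d"
  obtains d0 where "d = p * d0" "\<not> p dvd d0"
proof -
  obtain d0 where d0: "d = p * d0" using assms(3) by blast
  have "\<not> p dvd d0"
  proof
    assume "p dvd d0"
    then have "p ^ 2 dvd d" using d0 by (simp add: power2_eq_square)
    then have "is_unit p" using assms(1) squarefreeD by blast
    then show False using assms(2) not_prime_unit by blast
  qed
  then show ?thesis using d0 that by blast
qed

lemma Legendre_twist_disc_nonresidue:
  fixes A B p :: int
  assumes "Legendre (disc (-2 * A) (A ^ 2 - 4 * B)) p = -1"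
  shows "\<not> QuadRes p B"
proof
  assume "QuadRes p B"
  then obtain z where "[z ^ 2 = B] (mod p)" unfolding QuadRes_def by blast
  then have "[(16 * (A ^ 2 - 4 * B) * z) ^ 2 = (16 * (A ^ 2 - 4 * B)) ^ 2 * B] (mod p)"
    by (simp add: power_mult_distrib cong_mult cong_refl)
  moreover have "(16 * (A ^ 2 - 4 * B)) ^ 2 * B = disc (-2 * A) (A ^ 2 - 4 * B)"
    by (simp add: disc_def power2_eq_square algebra_simps)
  ultimately have "QuadRes p (disc (-2 * A) (A ^ 2 - 4 * B))" unfolding QuadRes_def by auto
  then show False using assms by (simp add: Legendre_def split: if_splits)
qed

theorem lemma3p1:
  fixes A B d p :: int
  assumes elliptic: "disc A B \<noteq> 0"
    and tors: "card (two_torsion_Q A B) = 2"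
    and sqf: "squarefree d"
    and pr: "prime p"
    and pd: "p dvd d"
    and cop: "coprime p (2 * disc A B)"
  shows "(Legendre (disc (-2 * A) (A^2 - 4 * B)) p = -1 \<longrightarrow>
            W p A B d = sq_span1 p (qp_of_int p (disc A B)))
       \<and> (Legendre (disc (-2 * A) (A^2 - 4 * B)) p = 1 \<longrightarrow>
            (\<forall>s \<in> Qp p. qp_mult p s s = qp_of_int p B \<longrightarrow>
               W p A B d = sq_span2 p (qp_of_int p (disc A B))
                 (qp_mult p (qp_of_int p d)
                    (qp_add p (qp_of_int p A) (qp_mult p (qp_of_int p 2) s)))))"
proof -
  obtain d0 where d0: "d = p * d0" "\<not> p dvd d0"
    using squarefree_exact_prime_factor[OF sqf pr pd] .
  interpret twist_at_p p A B d d0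
    using pr d0 coprime_two_disc_units[OF pr cop] by unfold_locales
  show ?thesis
  proof (intro conjI impI ballI)
    assume "Legendre (disc (-2 * A) (A^2 - 4 * B)) p = -1"
    then show "W p A B d = sq_span1 p (qp_of_int p (disc A B))"
      by (intro W_nonresidue Legendre_twist_disc_nonresidue)
  next
    fix s assume "s \<in> Qp p" "qp_mult p s s = qp_of_int p B"
    then interpret split_twist_at_p p A B d d0 s by unfold_locales
    show "W p A B d = sq_span2 p (qp_of_int p (disc A B))
        (qp_mult p (qp_of_int p d) (qp_add p (qp_of_int p A) (qp_mult p (qp_of_int p 2) s)))"
      using W_split by (simp add: torsion_x_def)
  qed
qed

end
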